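(* Let $n\ge 4$ and let $\mathcal{G}=\{G_1,G_2,\ldots,G_n\}$ be a family of $n$ graphs, all on the same vertex set $[n]=\{1,\ldots,n\}$, such that $e(G_i)>\binom{n-1}{2}+1$ for every $i=1,2,\ldots,n$. Then $\mathcal{G}$ admits a rainbow Hamiltonian cycle.
   Context: $e(G)$ denotes the number of edges of $G$. Given a family $\mathcal{G}=\{G_1,\ldots,G_n\}$ of graphs on a common vertex set $V$ with $|V|=n$, a rainbow Hamiltonian cycle in $\mathcal{G}$ is a Hamiltonian cycle $C$ on $V$ (a cycle visiting every vertex exactly once, so it has $n$ edges) whose edges can be labeled $e_1,\ldots,e_n$ with $e_i\in E(G_i)$ for each $i$; i.e. distinct edges of $C$ belong to distinct graphs of the family, each graph used once. *)

theory Defs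
  imports Main
begin

definition simple_graph_on :: "'a set \<Rightarrow> 'a set set \<Rightarrow> bool" where
  "simple_graph_on V E \<longleftrightarrow> (\<forall>e\<in>E. e \<subseteq> V \<and> card e = 2)"

definition num_edges :: "'a set set \<Rightarrow> nat" where
  "num_edges E = card E"

text \<open>A Hamiltonian cycle on V (with |V| \<ge> 3) is given by a cyclic ordering
  vs of the vertices; its edges are {vs!j, vs!((j+1) mod |V|)} for j < |V|.\<close>
definition ham_cycle_seq :: "'a set \<Rightarrow> 'a list \<Rightarrow> bool" where
  "ham_cycle_seq V vs \<longleftrightarrow> distinct vs \<and> set vs = V \<and> length vs \<ge> 3"

definition cycle_edge :: "'a list \<Rightarrow> nat \<Rightarrow> 'a set" where
  "cycle_edge vs j = {vs ! j, vs ! ((j + 1) mod length vs)}"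

text \<open>The family G_1,...,G_n (indexed by {1..n}) on vertex set {1..n} has a
  rainbow Hamiltonian cycle: there is a Hamiltonian cycle and a bijection
  assigning to each graph index i a distinct edge position of the cycle whose
  edge lies in G_i.\<close>
definition rainbow_ham_cycle :: "nat \<Rightarrow> (nat \<Rightarrow> nat set set) \<Rightarrow> bool" where
  "rainbow_ham_cycle n G \<longleftrightarrow>
     (\<exists>vs \<sigma>. ham_cycle_seq {1..n} vs \<and> bij_betw \<sigma> {1..n} {..<n} \<and>
        (\<forall>i\<in>{1..n}. cycle_edge vs (\<sigma> i) \<in> G i))"

end

(*
  Among all cyclic orderings of the vertices choose one of minimal cost, the cost being the
  number of pairs (e, i) with e a cycle edge and e not in G_i. Write m(e) for the number of
  graphs missing e and D(x) for the number of pairs (u, i) with xu not in G_i. At a cycle edge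
  ab, no 2-opt move decreases the cost; summing these moves gives
  (n - 2) m(ab) + cost <= D(a) + D(b). Every complement has at most n - 3 edges, so summing
  over the cycle gives (n - 1) cost <= 2n(n - 3), while bounding D(a) + D(b) directly gives
  m(ab) <= n - 2. Together these estimates exclude any violation of Hall's condition for
  assigning to each graph a cycle position whose edge it contains.
*)

theory Submission
  imports Defs
begin

definition hall_condition :: "'i set \<Rightarrow> ('i \<Rightarrow> 'y set) \<Rightarrow> bool" where
  "hall_condition I A \<longleftrightarrow> (\<forall>J\<subseteq>I. card J \<le> card (\<Union>(A ` J)))"

lemma hall_condition_subset: "hall_condition I A \<Longrightarrow> J \<subseteq> I \<Longrightarrow> hall_condition J A"
  unfolding hall_condition_def by blast

lemma sdr_Un:
  assumes "inj_on f J" "\<forall>i\<in>J. f i \<in> A i \<inter> U" "inj_on g K" "\<forall>i\<in>K. g i \<in> A i - U"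
  shows "\<exists>h. inj_on h (J \<union> K) \<and> (\<forall>i\<in>J \<union> K. h i \<in> A i)"
proof -
  define h where "h i = (if i \<in> J then f i else g i)" for i
  have "inj_on h J" "inj_on h (K - J)"
    using assms(1,3) by (auto simp: h_def inj_on_def)
  moreover have "h ` J \<inter> h ` (K - J) = {}"
    using assms(2,4) by (auto simp: h_def)
  ultimately have "inj_on h (J \<union> (K - J))"
    by (intro inj_on_Un[THEN iffD2]) blast
  moreover have "\<forall>i\<in>J \<union> K. h i \<in> A i"
    using assms(2,4) by (auto simp: h_def)
  ultimately show ?thesis by auto
qed

lemma hall_condition_Diff_critical:
  assumes "hall_condition I A" "finite I" "\<And>i. i \<in> I \<Longrightarrow> finite (A i)"
    and "J \<subseteq> I" "card J = card (\<Union>(A ` J))"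
  shows "hall_condition (I - J) (\<lambda>i. A i - \<Union>(A ` J))"
  unfolding hall_condition_def
proof (intro allI impI)
  fix K assume K: "K \<subseteq> I - J"
  let ?U = "\<Union>(A ` J)"
  have fin: "finite K" "finite J"
    using K assms(2,4) finite_subset by blast+
  then have "finite ?U"
    using assms(3,4) by (intro finite_UN_I) auto
  have "card K + card J = card (K \<union> J)"
    using K fin by (subst card_Un_disjoint) auto
  also have "\<dots> \<le> card (\<Union>(A ` (K \<union> J)))"
    using assms(1,4) K unfolding hall_condition_def by (meson Diff_subset subset_trans Un_least)
  finally have "card K \<le> card (\<Union>(A ` (K \<union> J))) - card ?U"
    using assms(5) by simp
  also have "\<dots> \<le> card (\<Union>(A ` (K \<union> J)) - ?U)"
    using \<open>finite ?U\<close> by (rule diff_card_le_card_Diff)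
  also have "\<Union>(A ` (K \<union> J)) - ?U = \<Union>((\<lambda>i. A i - ?U) ` K)"
    by auto
  finally show "card K \<le> card (\<Union>((\<lambda>i. A i - ?U) ` K))" .
qed

lemma hall_condition_Diff_surplus:
  assumes "hall_condition I A" "finite I" "\<And>i. i \<in> I \<Longrightarrow> finite (A i)"
    and "\<not> (\<exists>J\<subseteq>I. J \<noteq> {} \<and> J \<noteq> I \<and> card J = card (\<Union>(A ` J)))" and "i0 \<in> I"
  shows "hall_condition (I - {i0}) (\<lambda>i. A i - {y})"
  unfolding hall_condition_def
proof (intro allI impI)
  fix K assume K: "K \<subseteq> I - {i0}"
  show "card K \<le> card (\<Union>((\<lambda>i. A i - {y}) ` K))"
  proof (cases "K = {}")
    case False
    have "card K \<le> card (\<Union>(A ` K))" "card K \<noteq> card (\<Union>(A ` K))"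
      using assms(1,4,5) K False unfolding hall_condition_def by blast+
    moreover have "card (\<Union>(A ` K)) - 1 \<le> card (\<Union>(A ` K) - {y})"
      by (simp add: card_Diff_singleton_if)
    moreover have "card (\<Union>((\<lambda>i. A i - {y}) ` K)) = card (\<Union>(A ` K) - {y})"
      by (rule arg_cong[of _ _ card]) auto
    ultimately show ?thesis
      by linarith
  qed simp
qed

theorem hall_theorem:
  fixes A :: "'i \<Rightarrow> 'y set"
  assumes "finite I" "\<And>i. i \<in> I \<Longrightarrow> finite (A i)" "hall_condition I A"
  shows "\<exists>f. inj_on f I \<and> (\<forall>i\<in>I. f i \<in> A i)"
  using assms
proof (induction "card I" arbitrary: I A rule: less_induct)
  case less
  have IH: "\<exists>f. inj_on f J \<and> (\<forall>i\<in>J. f i \<in> B i)"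
    if "J \<subset> I" "\<And>i. i \<in> J \<Longrightarrow> finite (B i)" "hall_condition J B"
    for J and B :: "'i \<Rightarrow> 'y set"
  proof -
    have "card J < card I" "finite J"
      using that(1) less.prems(1) by (auto intro: finite_subset psubset_card_mono)
    then show ?thesis
      using that(2,3) by (intro less.hyps) auto
  qed
  show ?case
  proof (cases "\<exists>J\<subseteq>I. J \<noteq> {} \<and> J \<noteq> I \<and> card J = card (\<Union>(A ` J))")
    case True
    then obtain J where J: "J \<subseteq> I" "J \<noteq> {}" "J \<noteq> I" "card J = card (\<Union>(A ` J))"
      by blast
    let ?U = "\<Union>(A ` J)"
    obtain f g where "inj_on f J" "\<forall>i\<in>J. f i \<in> A i"
      and "inj_on g (I - J)" "\<forall>i\<in>I - J. g i \<in> A i - ?U"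
      using IH[OF _ _ hall_condition_subset[OF less.prems(3) J(1)]]
        IH[OF _ _ hall_condition_Diff_critical[OF less.prems(3,1,2) J(1,4)]]
        J(1-3) less.prems(2) by blast
    then show ?thesis
      using sdr_Un[of f J A ?U g "I - J"] J(1) by (auto simp: Un_absorb1)
  next
    case no_critical: False
    show ?thesis
    proof (cases "I = {}")
      case False
      then obtain i0 where i0: "i0 \<in> I"
        by blast
      have "card {i0} \<le> card (\<Union>(A ` {i0}))"
        using less.prems(3) i0 unfolding hall_condition_def by blast
      then obtain y where y: "y \<in> A i0"
        by fastforce
      obtain g where "inj_on g (I - {i0})" "\<forall>i\<in>I - {i0}. g i \<in> A i - {y}"
        using IH[OF _ _ hall_condition_Diff_surplus[OF less.prems(3,1,2) no_critical i0]]
          i0 less.prems(2) by blast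
      then show ?thesis
        using sdr_Un[of "\<lambda>_. y" "{i0}" A "{y}" g "I - {i0}"] y i0 by (auto simp: insert_absorb)
    qed simp
  qed
qed

fun path_edges :: "'a list \<Rightarrow> 'a set list" where
  "path_edges (x # y # zs) = {x, y} # path_edges (y # zs)"
| "path_edges _ = []"

lemma length_path_edges [simp]: "length (path_edges xs) = length xs - 1"
  by (induction xs rule: path_edges.induct) auto

lemma nth_path_edges: "i + 1 < length xs \<Longrightarrow> path_edges xs ! i = {xs ! i, xs ! (i + 1)}"
proof (induction xs arbitrary: i rule: path_edges.induct)
  case (1 x y zs)
  then show ?case by (cases i) auto
qed auto

lemma path_edges_append:
  "xs \<noteq> [] \<Longrightarrow> path_edges (xs @ y # ys) = path_edges xs @ {last xs, y} # path_edges (y # ys)"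
  by (induction xs rule: path_edges.induct) auto

lemma path_edges_snoc: "xs \<noteq> [] \<Longrightarrow> path_edges (xs @ [y]) = path_edges xs @ [{last xs, y}]"
  using path_edges_append[of xs y "[]"] by simp

lemma path_edges_Cons: "xs \<noteq> [] \<Longrightarrow> path_edges (x # xs) = {x, hd xs} # path_edges xs"
  by (cases xs) auto

lemma path_edges_rev: "path_edges (rev xs) = rev (path_edges xs)"
proof (induction xs)
  case (Cons x xs)
  then show ?case
    by (cases "xs = []") (simp_all add: path_edges_snoc path_edges_Cons last_rev insert_commute)
qed simp

definition cycle_edges :: "'a list \<Rightarrow> 'a set list" where
  "cycle_edges vs = path_edges (vs @ [hd vs])"

lemma length_cycle_edges [simp]: "length (cycle_edges vs) = length vs"
  by (simp add: cycle_edges_def)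

lemma nth_cycle_edges: "j < length vs \<Longrightarrow> cycle_edges vs ! j = cycle_edge vs j"
proof -
  assume j: "j < length vs"
  have "(vs @ [hd vs]) ! (j + 1) = vs ! ((j + 1) mod length vs)"
  proof (cases "j + 1 < length vs")
    case False
    then have "j + 1 = length vs" using j by simp
    then show ?thesis using j by (cases vs) (auto simp: nth_append)
  qed (simp add: nth_append)
  then show ?thesis
    using j by (simp add: cycle_edges_def cycle_edge_def nth_path_edges nth_append)
qed

lemma cycle_edges_rotate1: "cycle_edges (rotate1 vs) = rotate1 (cycle_edges vs)"
proof (cases vs rule: remdups_adj.cases)
  case (3 x y zs)
  then show ?thesis
    using path_edges_snoc[of "y # zs @ [x]" y] by (simp add: cycle_edges_def)
qed (simp_all add: cycle_edges_def)

lemma cycle_edges_rotate: "cycle_edges (rotate p vs) = rotate p (cycle_edges vs)"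
  by (induction p) (simp_all add: rotate_Suc cycle_edges_rotate1)

lemma sum_list_rotate: "sum_list (rotate p xs) = sum_list (xs :: 'a :: comm_monoid_add list)"
  by (simp add: rotate_drop_take) (metis add.commute append_take_drop_id sum_list_append)

definition missing_count :: "('i \<Rightarrow> 'a set set) \<Rightarrow> 'i set \<Rightarrow> 'a set \<Rightarrow> nat" where
  "missing_count G I e = card {i\<in>I. e \<notin> G i}"

definition cycle_cost :: "('i \<Rightarrow> 'a set set) \<Rightarrow> 'i set \<Rightarrow> 'a list \<Rightarrow> nat" where
  "cycle_cost G I vs = sum_list (map (missing_count G I) (cycle_edges vs))"

lemma cycle_cost_eq_sum:
  "cycle_cost G I vs = (\<Sum>j<length vs. missing_count G I (cycle_edge vs j))"
  by (simp add: cycle_cost_def sum_list_sum_nth atLeast0LessThan nth_cycle_edges)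

lemma cycle_cost_rotate: "cycle_cost G I (rotate p vs) = cycle_cost G I vs"
  by (simp add: cycle_cost_def cycle_edges_rotate sum_list_rotate flip: rotate_map)

lemma card_mult_le_cycle_cost:
  assumes "T \<subseteq> {..<length vs}" "\<And>j. j \<in> T \<Longrightarrow> k \<le> missing_count G I (cycle_edge vs j)"
  shows "card T * k \<le> cycle_cost G I vs"
proof -
  have "card T * k \<le> (\<Sum>j\<in>T. missing_count G I (cycle_edge vs j))"
    using assms(2) sum_mono[of T "\<lambda>_. k"] by simp
  also have "\<dots> \<le> cycle_cost G I vs"
    unfolding cycle_cost_eq_sum using assms(1) by (intro sum_mono2) auto
  finally show ?thesis .
qed

lemma cycle_cost_rev_segment:
  assumes "seg \<noteq> []" "rest \<noteq> []"
  shows "cycle_cost G I (a # seg @ rest) + missing_count G I {a, last seg}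
           + missing_count G I {hd seg, hd rest}
       = cycle_cost G I (a # rev seg @ rest) + missing_count G I {a, hd seg}
           + missing_count G I {last seg, hd rest}"
proof -
  have rest: "rest @ [a] = hd rest # (tl rest @ [a])"
    using assms(2) by simp
  have "cycle_edges (a # seg @ rest)
      = {a, hd seg} # path_edges seg @ {last seg, hd rest} # path_edges (rest @ [a])"
    using assms path_edges_append[of seg "hd rest" "tl rest @ [a]"]
    by (simp add: cycle_edges_def path_edges_Cons flip: rest)
  moreover have "cycle_edges (a # rev seg @ rest)
      = {a, last seg} # rev (path_edges seg) @ {hd seg, hd rest} # path_edges (rest @ [a])"
    using assms path_edges_append[of "rev seg" "hd rest" "tl rest @ [a]"]
    by (simp add: cycle_edges_def path_edges_Cons path_edges_rev hd_rev last_rev flip: rest)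
  ultimately show ?thesis
    by (simp add: cycle_cost_def flip: rev_map)
qed

definition min_cost_cycle :: "('i \<Rightarrow> 'a set set) \<Rightarrow> 'i set \<Rightarrow> 'a list \<Rightarrow> bool" where
  "min_cost_cycle G I vs \<longleftrightarrow> distinct vs \<and>
     (\<forall>us. distinct us \<and> set us = set vs \<longrightarrow> cycle_cost G I vs \<le> cycle_cost G I us)"

lemma min_cost_cycle_exists:
  assumes "finite V"
  obtains vs where "set vs = V" "min_cost_cycle G I vs"
proof -
  let ?L = "{us. distinct us \<and> set us = V}"
  obtain vs0 where "vs0 \<in> ?L"
    using finite_distinct_list[OF assms] by blast
  then obtain vs where "vs \<in> ?L" "\<And>us. us \<in> ?L \<Longrightarrow> cycle_cost G I vs \<le> cycle_cost G I us"
    using ex_has_least_nat[of "\<lambda>us. us \<in> ?L" _ "cycle_cost G I"] by blast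
  then show ?thesis
    using that by (auto simp: min_cost_cycle_def)
qed

lemma min_cost_cycle_rotate: "min_cost_cycle G I vs \<Longrightarrow> min_cost_cycle G I (rotate p vs)"
  by (simp add: min_cost_cycle_def cycle_cost_rotate)

(* Reversing the segment b, ..., w!k is the 2-opt move replacing the edges ab and
   (w!k)(w!(k+1)) by a(w!k) and b(w!(k+1)). *)
lemma min_cost_cycle_exchange:
  assumes "min_cost_cycle G I (a # b # w)" "k + 1 < length w"
  shows "missing_count G I {a, b} + missing_count G I {w ! k, w ! (k + 1)}
       \<le> missing_count G I {a, w ! k} + missing_count G I {b, w ! (k + 1)}"
proof -
  define seg where "seg = b # take (k + 1) w"
  define rest where "rest = drop (k + 1) w"
  have split: "a # b # w = a # seg @ rest"
    by (simp add: seg_def rest_def)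
  have seg: "seg \<noteq> []" "hd seg = b" "last seg = w ! k"
    using assms(2) by (auto simp: seg_def last_conv_nth)
  have rest: "rest \<noteq> []" "hd rest = w ! (k + 1)"
    using assms(2) by (auto simp: rest_def hd_drop_conv_nth)
  have "cycle_cost G I (a # seg @ rest) \<le> cycle_cost G I (a # rev seg @ rest)"
    using assms(1) unfolding min_cost_cycle_def split by auto
  then show ?thesis
    using cycle_cost_rev_segment[OF seg(1) rest(1), of G I a] seg rest by simp
qed

definition missing_degree :: "('i \<Rightarrow> 'a set set) \<Rightarrow> 'i set \<Rightarrow> 'a set \<Rightarrow> 'a \<Rightarrow> nat" where
  "missing_degree G I V x = (\<Sum>u\<in>V - {x}. missing_count G I {x, u})"

lemma missing_degree_Cons:
  "distinct (x # us) \<Longrightarrow>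
    missing_degree G I (set (x # us)) x = sum_list (map (\<lambda>u. missing_count G I {x, u}) us)"
  by (simp add: missing_degree_def sum_list_distinct_conv_sum_set)

lemma sum_nth_distinct: "distinct xs \<Longrightarrow> (\<Sum>k<length xs. f (xs ! k)) = (\<Sum>x\<in>set xs. f x)"
  by (simp add: sum_list_sum_nth atLeast0LessThan flip: sum_list_distinct_conv_sum_set)

lemma min_cost_cycle_path_bound:
  assumes "min_cost_cycle G I (a # b # w)"
  shows "(length w - 1) * missing_count G I {a, b} + sum_list (map (missing_count G I) (path_edges w))
       \<le> sum_list (map (\<lambda>u. missing_count G I {a, u}) (butlast w))
         + sum_list (map (\<lambda>u. missing_count G I {b, u}) (tl w))"
proof -
  let ?m = "missing_count G I"
  have "(\<Sum>k<length w - 1. ?m {a, b} + ?m {w ! k, w ! (k + 1)})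
      \<le> (\<Sum>k<length w - 1. ?m {a, w ! k} + ?m {b, w ! (k + 1)})"
    by (intro sum_mono min_cost_cycle_exchange[OF assms]) simp
  then show ?thesis
    by (simp add: sum.distrib sum_list_sum_nth atLeast0LessThan nth_path_edges nth_butlast nth_tl)
qed

lemma min_cost_cycle_local_bound_Cons:
  assumes "min_cost_cycle G I (a # b # w)" "w \<noteq> []"
  defines "V \<equiv> set (a # b # w)"
  shows "length w * missing_count G I {a, b} + cycle_cost G I (a # b # w)
       \<le> missing_degree G I V a + missing_degree G I V b"
proof -
  let ?m = "missing_count G I"
  have dist: "distinct (a # b # w)" "distinct (b # a # w)"
    using assms(1) by (auto simp: min_cost_cycle_def)
  have "cycle_edges (a # b # w) = {a, b} # {b, hd w} # path_edges w @ [{last w, a}]"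
    using assms(2) by (simp add: cycle_edges_def path_edges_Cons path_edges_snoc)
  then have cost: "cycle_cost G I (a # b # w)
      = ?m {a, b} + ?m {b, hd w} + sum_list (map ?m (path_edges w)) + ?m {a, last w}"
    by (simp add: cycle_cost_def insert_commute)
  have "missing_degree G I V a = ?m {a, b} + sum_list (map (\<lambda>u. ?m {a, u}) (butlast w @ [last w]))"
    using missing_degree_Cons[OF dist(1)] by (simp add: V_def assms(2))
  then have deg_a: "missing_degree G I V a
      = ?m {a, b} + sum_list (map (\<lambda>u. ?m {a, u}) (butlast w)) + ?m {a, last w}"
    by simp
  have "missing_degree G I V b = ?m {a, b} + sum_list (map (\<lambda>u. ?m {b, u}) (hd w # tl w))"
    using missing_degree_Cons[OF dist(2)] assms(2) by (simp add: V_def insert_commute)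
  then have deg_b: "missing_degree G I V b
      = ?m {a, b} + ?m {b, hd w} + sum_list (map (\<lambda>u. ?m {b, u}) (tl w))"
    by simp
  have "length w = (length w - 1) + 1"
    using assms(2) by simp
  then show ?thesis
    using min_cost_cycle_path_bound[OF assms(1)] cost deg_a deg_b
    by (simp add: algebra_simps)
qed

lemma min_cost_cycle_local_bound:
  assumes "min_cost_cycle G I vs" "3 \<le> length vs" "p < length vs"
  shows "(length vs - 2) * missing_count G I (cycle_edge vs p) + cycle_cost G I vs
       \<le> missing_degree G I (set vs) (vs ! p)
         + missing_degree G I (set vs) (vs ! ((p + 1) mod length vs))"
proof -
  have ne: "vs \<noteq> []" and "Suc (Suc 0) \<le> length (rotate p vs)"
    using assms(2) by auto
  then obtain x y w where rot: "rotate p vs = x # y # w"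
    by (metis Suc_le_length_iff)
  have "x = vs ! p" "y = vs ! ((p + 1) mod length vs)"
    using nth_rotate[of 0 vs p] nth_rotate[of 1 vs p] assms(2,3) ne by (simp_all add: rot)
  moreover have "w \<noteq> []" "length w = length vs - 2"
    using assms(2) arg_cong[OF rot, of length] by auto
  moreover have "set (x # y # w) = set vs"
    by (metis rot set_rotate)
  ultimately show ?thesis
    using min_cost_cycle_local_bound_Cons[of G I x y w] min_cost_cycle_rotate[OF assms(1), of p]
      cycle_cost_rotate[of G I p vs]
    by (simp add: rot cycle_edge_def)
qed

lemma min_cost_cycle_cost_bound:
  assumes "min_cost_cycle G I vs" "3 \<le> length vs"
  shows "(length vs - 1) * cycle_cost G I vs \<le> (\<Sum>v\<in>set vs. missing_degree G I (set vs) v)"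
proof -
  let ?n = "length vs" and ?C = "cycle_cost G I vs" and ?D = "missing_degree G I (set vs)"
  have dist: "distinct vs"
    using assms(1) by (simp add: min_cost_cycle_def)
  have "(\<Sum>p<?n. (?n - 2) * missing_count G I (cycle_edge vs p) + ?C)
      \<le> (\<Sum>p<?n. ?D (vs ! p)) + (\<Sum>p<?n. ?D (vs ! ((p + 1) mod ?n)))"
    unfolding sum.distrib[symmetric] using min_cost_cycle_local_bound[OF assms] by (intro sum_mono) simp
  moreover have "(\<Sum>p<?n. (?n - 2) * missing_count G I (cycle_edge vs p) + ?C) = (?n - 2) * ?C + ?n * ?C"
    by (simp add: sum.distrib cycle_cost_eq_sum sum_distrib_left)
  moreover have "(\<Sum>p<?n. ?D (vs ! p)) = (\<Sum>v\<in>set vs. ?D v)"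
    using dist by (rule sum_nth_distinct)
  moreover have "(\<Sum>p<?n. ?D (vs ! ((p + 1) mod ?n))) = (\<Sum>p<length (rotate1 vs). ?D (rotate1 vs ! p))"
    by (intro sum.cong) (simp_all add: nth_rotate1)
  moreover have "\<dots> = (\<Sum>v\<in>set vs. ?D v)"
    using dist sum_nth_distinct[of "rotate1 vs" ?D] by simp
  ultimately have "(?n - 2) * ?C + ?n * ?C \<le> 2 * (\<Sum>v\<in>set vs. ?D v)"
    by simp
  moreover have "(?n - 2) * ?C + ?n * ?C = 2 * ((?n - 1) * ?C)"
    using assms(2) by (simp add: algebra_simps)
  ultimately show ?thesis
    by linarith
qed

definition non_edges :: "'a set \<Rightarrow> 'a set set \<Rightarrow> 'a set set" where
  "non_edges V E = {e. e \<subseteq> V \<and> card e = 2} - E"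

lemma finite_non_edges: "finite V \<Longrightarrow> finite (non_edges V E)"
  unfolding non_edges_def by (rule finite_subset[of _ "Pow V"]) auto

lemma card_non_edges:
  assumes "finite V" "simple_graph_on V E"
  shows "card (non_edges V E) + card E = card V choose 2"
proof -
  define A where "A = {e. e \<subseteq> V \<and> card e = 2}"
  have "E \<subseteq> A"
    using assms(2) by (auto simp: simple_graph_on_def A_def)
  moreover have "finite A"
    unfolding A_def by (rule finite_subset[of _ "Pow V"]) (use assms(1) in auto)
  ultimately have "card (A - E) + card E = card A"
    by (simp add: card_Diff_subset card_mono finite_subset)
  then show ?thesis
    using n_subsets[OF assms(1), of 2] by (simp add: non_edges_def A_def)
qed

lemma card_non_neighbours:
  assumes "x \<in> V"
  shows "card {u \<in> V - {x}. {x, u} \<notin> E} = card {e \<in> non_edges V E. x \<in> e}"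
proof -
  have "inj_on (\<lambda>u. {x, u}) (V - {x})"
    by (auto simp: inj_on_def doubleton_eq_iff)
  moreover have "(\<lambda>u. {x, u}) ` {u \<in> V - {x}. {x, u} \<notin> E} = {e \<in> non_edges V E. x \<in> e}"
  proof (intro equalityI subsetI)
    fix e assume "e \<in> {e \<in> non_edges V E. x \<in> e}"
    then have e: "e \<subseteq> V" "card e = 2" "e \<notin> E" "x \<in> e"
      by (auto simp: non_edges_def)
    then have "\<exists>u. e = {x, u} \<and> u \<noteq> x"
      by (auto simp: card_2_iff doubleton_eq_iff)
    then obtain u where "e = {x, u}" "u \<noteq> x" "u \<in> V" "e \<notin> E"
      using e by auto
    then show "e \<in> (\<lambda>u. {x, u}) ` {u \<in> V - {x}. {x, u} \<notin> E}"
      by auto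
  qed (use assms in \<open>auto simp: non_edges_def\<close>)
  ultimately show ?thesis
    by (metis (no_types, lifting) card_image inj_on_subset mem_Collect_eq subsetI)
qed

lemma sum_card_incident:
  assumes "finite V" "\<forall>e\<in>F. e \<subseteq> V \<and> card e = 2"
  shows "(\<Sum>x\<in>V. card {e \<in> F. x \<in> e}) = 2 * card F"
proof (rule sum_multicount)
  show "finite F"
    by (rule finite_subset[of _ "Pow V"]) (use assms in auto)
  have "{x \<in> V. x \<in> e} = e" if "e \<in> F" for e
    using assms(2) that by auto
  then show "\<forall>e\<in>F. card {x \<in> V. x \<in> e} = 2"
    using assms(2) by simp
qed (fact assms(1))

lemma card_incident_pair_le:
  assumes "finite F" "\<forall>e\<in>F. card e = 2" "a \<noteq> b"
  shows "card {e \<in> F. a \<in> e} + card {e \<in> F. b \<in> e} \<le> card F + 1"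
proof -
  have "{e \<in> F. a \<in> e} \<inter> {e \<in> F. b \<in> e} \<subseteq> {{a, b}}"
    using assms(2,3) by (auto simp: card_2_iff)
  then have "card ({e \<in> F. a \<in> e} \<inter> {e \<in> F. b \<in> e}) \<le> 1"
    using card_mono[of "{{a, b}}"] by simp
  moreover have "card ({e \<in> F. a \<in> e} \<union> {e \<in> F. b \<in> e}) \<le> card F"
    using assms(1) by (intro card_mono) auto
  ultimately show ?thesis
    using card_Un_Int[of "{e \<in> F. a \<in> e}" "{e \<in> F. b \<in> e}"] assms(1) by simp
qed

lemma missing_degree_eq_sum:
  assumes "finite V" "finite I" "x \<in> V"
  shows "missing_degree G I V x = (\<Sum>i\<in>I. card {e \<in> non_edges V (G i). x \<in> e})"
proof -
  have "missing_degree G I V x = (\<Sum>i\<in>I. card {u \<in> V - {x}. {x, u} \<notin> G i})"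
    unfolding missing_degree_def missing_count_def
    using assms(1,2) by (intro sum_multicount_gen) auto
  then show ?thesis
    by (simp only: card_non_neighbours[OF assms(3)])
qed

lemma sum_missing_degree:
  assumes "finite V" "finite I"
  shows "(\<Sum>x\<in>V. missing_degree G I V x) = 2 * (\<Sum>i\<in>I. card (non_edges V (G i)))"
proof -
  have "(\<Sum>x\<in>V. missing_degree G I V x) = (\<Sum>i\<in>I. \<Sum>x\<in>V. card {e \<in> non_edges V (G i). x \<in> e})"
    using assms by (simp add: missing_degree_eq_sum sum.swap[of _ I])
  also have "\<dots> = (\<Sum>i\<in>I. 2 * card (non_edges V (G i)))"
    using assms(1) by (intro sum.cong refl sum_card_incident) (auto simp: non_edges_def)
  finally show ?thesis
    by (simp add: sum_distrib_left)
qed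

lemma missing_degree_pair_le:
  assumes "finite V" "finite I" "a \<in> V" "b \<in> V" "a \<noteq> b"
  shows "missing_degree G I V a + missing_degree G I V b \<le> (\<Sum>i\<in>I. card (non_edges V (G i)) + 1)"
proof -
  have "card {e \<in> non_edges V (G i). a \<in> e} + card {e \<in> non_edges V (G i). b \<in> e}
      \<le> card (non_edges V (G i)) + 1" for i
    by (rule card_incident_pair_le[OF finite_non_edges[OF assms(1)] _ assms(5)])
      (simp add: non_edges_def)
  then show ?thesis
    using assms(1-4) by (simp add: missing_degree_eq_sum sum_mono flip: sum.distrib)
qed

lemma cycle_edge_two_subset:
  assumes "distinct vs" "2 \<le> length vs" "j < length vs"
  shows "cycle_edge vs j \<subseteq> set vs" "card (cycle_edge vs j) = 2"
proof -
  have "(j + 1) mod length vs \<noteq> j"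
  proof (cases "j + 1 < length vs")
    case False
    then have "j + 1 = length vs"
      using assms(3) by simp
    then show ?thesis
      using assms(2) by auto
  qed simp
  moreover have "(j + 1) mod length vs < length vs"
    using assms(3) by (intro mod_less_divisor) linarith
  ultimately show "cycle_edge vs j \<subseteq> set vs" "card (cycle_edge vs j) = 2"
    using assms by (auto simp: cycle_edge_def nth_eq_iff_index_eq)
qed

lemma inj_on_cycle_edge:
  assumes "distinct vs" "3 \<le> length vs"
  shows "inj_on (cycle_edge vs) {..<length vs}"
proof (rule inj_onI)
  let ?n = "length vs"
  fix j k assume jk: "j \<in> {..<?n}" "k \<in> {..<?n}" "cycle_edge vs j = cycle_edge vs k"
  show "j = k"
  proof (rule ccontr)
    assume "j \<noteq> k"
    moreover have "0 < ?n"
      using assms(2) by linarith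
    then have "(j + 1) mod ?n < ?n" "(k + 1) mod ?n < ?n"
      by simp_all
    ultimately have "j = (k + 1) mod ?n" "k = (j + 1) mod ?n"
      using jk assms(1) by (auto simp: cycle_edge_def doubleton_eq_iff nth_eq_iff_index_eq)
    then have "(j + 2) mod ?n = j mod ?n"
      using jk(1) mod_add_left_eq[of "j + 1" ?n 1] by (simp add: add.assoc)
    then have "?n dvd (j + 2) - j"
      using mod_eq_dvd_iff_nat[of j "j + 2" ?n] by linarith
    then show False
      using assms(2) dvd_imp_le[of ?n 2] by simp
  qed
qed

(* t uncovered cycle positions, each missed by all s graphs of a Hall violator, and cost C. *)
lemma no_hall_violation_arith:
  fixes n s t C :: nat
  assumes "3 \<le> t" "t + 3 \<le> n" "n + 1 \<le> s + t" "t * s \<le> C" "(n - 1) * C \<le> 2 * n * (n - 3)"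
  shows False
proof -
  define a b where "a = t - 3" and "b = n - t - 3"
  then have t: "t = a + 3" and n: "n = a + b + 6"
    using assms(1,2) by linarith+
  have "3 * (a + b + 4) \<le> t * (b + 4)"
    using t by (simp add: algebra_simps)
  also have "\<dots> \<le> t * s"
    using assms(3) t n by (intro mult_le_mono2) linarith
  finally have "(a + b + 5) * (3 * (a + b + 4)) \<le> (a + b + 5) * C"
    using assms(4) by (intro mult_le_mono2) linarith
  also have "\<dots> \<le> 2 * (a + b + 6) * (a + b + 3)"
    using assms(5) n by (simp add: add.commute)
  finally show False
    by (simp add: algebra_simps)
qed

lemma le_of_pred_mult_le:
  fixes m n :: nat
  assumes "2 \<le> n" "(n - 1) * m \<le> n * (n - 2)"
  shows "m \<le> n - 2"
proof (rule ccontr)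
  define k where "k = n - 2"
  then have n: "n = k + 2"
    using assms(1) by simp
  assume "\<not> m \<le> n - 2"
  then have "(k + 1) * (k + 1) \<le> (k + 1) * m"
    using n by (intro mult_le_mono2) linarith
  also have "\<dots> \<le> (k + 2) * k"
    using assms(2) n by simp
  finally show False
    by (simp add: algebra_simps)
qed

(* The bound n - 3 on the number of non-edges is the hypothesis e(G_i) > C(n-1,2) + 1. *)
locale sparse_complements =
  fixes G :: "'i \<Rightarrow> 'a set set" and I :: "'i set" and V :: "'a set" and n :: nat
  assumes finite_I: "finite I" and finite_V: "finite V"
    and card_I: "card I = n" and card_V: "card V = n" and three_le_n: "3 \<le> n"
    and card_non_edges_le: "\<And>i. i \<in> I \<Longrightarrow> card (non_edges V (G i)) \<le> n - 3"
begin

lemma length_min_cost_cycle: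
  assumes "min_cost_cycle G I vs" "set vs = V"
  shows "length vs = n"
  using assms card_V distinct_card by (fastforce simp: min_cost_cycle_def)

lemma min_cost_cycle_cost_le:
  assumes "min_cost_cycle G I vs" "set vs = V"
  shows "(n - 1) * cycle_cost G I vs \<le> 2 * n * (n - 3)"
proof -
  have "length vs = n"
    using assms by (rule length_min_cost_cycle)
  then have "(n - 1) * cycle_cost G I vs \<le> 2 * (\<Sum>i\<in>I. card (non_edges V (G i)))"
    using min_cost_cycle_cost_bound[OF assms(1)] sum_missing_degree[OF finite_V finite_I]
      three_le_n assms(2) by simp
  also have "\<dots> \<le> 2 * (\<Sum>i\<in>I. n - 3)"
    using card_non_edges_le by (intro mult_le_mono2 sum_mono) auto
  finally show ?thesis
    using card_I by simp
qed

lemma missing_count_cycle_edge_le: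
  assumes "min_cost_cycle G I vs" "set vs = V" "p < n"
  shows "missing_count G I (cycle_edge vs p) \<le> n - 2"
proof -
  let ?m = "missing_count G I (cycle_edge vs p)" and ?C = "cycle_cost G I vs"
  define a b where "a = vs ! p" and "b = vs ! ((p + 1) mod n)"
  have len: "length vs = n"
    using assms(1,2) by (rule length_min_cost_cycle)
  then have ab: "cycle_edge vs p = {a, b}"
    by (simp add: cycle_edge_def a_def b_def)
  moreover have "cycle_edge vs p \<subseteq> V" "card (cycle_edge vs p) = 2"
    using cycle_edge_two_subset[of vs p] assms three_le_n len by (auto simp: min_cost_cycle_def)
  ultimately have "a \<in> V" "b \<in> V" "a \<noteq> b"
    by auto
  have "missing_degree G I V a + missing_degree G I V b \<le> (\<Sum>i\<in>I. card (non_edges V (G i)) + 1)"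
    using finite_V finite_I \<open>a \<in> V\<close> \<open>b \<in> V\<close> \<open>a \<noteq> b\<close> by (rule missing_degree_pair_le)
  also have "\<dots> \<le> (\<Sum>i\<in>I. n - 2)"
    using card_non_edges_le three_le_n by (intro sum_mono) fastforce
  finally have "missing_degree G I V a + missing_degree G I V b \<le> n * (n - 2)"
    using card_I by simp
  then have "(n - 2) * ?m + ?C \<le> n * (n - 2)"
    using min_cost_cycle_local_bound[OF assms(1), of p] assms three_le_n len card_I ab
    by (simp add: a_def b_def)
  moreover have "?m \<le> ?C"
    using assms(3) len unfolding cycle_cost_eq_sum by (intro member_le_sum) auto
  ultimately have "(n - 1) * ?m \<le> n * (n - 2)"
    using three_le_n by (simp add: algebra_simps)
  then show ?thesis
    using three_le_n by (intro le_of_pred_mult_le) simp_all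
qed

lemma card_positions_missing_le:
  assumes "min_cost_cycle G I vs" "set vs = V" "x \<in> I"
    and "T \<subseteq> {..<n}" "\<And>j. j \<in> T \<Longrightarrow> cycle_edge vs j \<notin> G x"
  shows "card T \<le> n - 3"
proof -
  have len: "length vs = n" and dist: "distinct vs"
    using length_min_cost_cycle[OF assms(1,2)] assms(1) by (auto simp: min_cost_cycle_def)
  have "cycle_edge vs j \<in> non_edges V (G x)" if "j \<in> T" for j
  proof -
    have "j < length vs" "2 \<le> length vs"
      using that assms(4) len three_le_n by auto
    then show ?thesis
      using cycle_edge_two_subset[OF dist] assms(2,5) that by (simp add: non_edges_def)
  qed
  then have "card (cycle_edge vs ` T) \<le> card (non_edges V (G x))"
    by (intro card_mono finite_non_edges finite_V) blast
  also have "\<dots> \<le> n - 3"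
    using assms(3) by (rule card_non_edges_le)
  finally have "card (cycle_edge vs ` T) \<le> n - 3" .
  moreover have "inj_on (cycle_edge vs) T"
    using inj_on_subset[OF inj_on_cycle_edge[OF dist]] three_le_n len assms(4) by simp
  ultimately show ?thesis
    by (simp add: card_image)
qed

lemma min_cost_cycle_hall_condition:
  assumes "min_cost_cycle G I vs" "set vs = V"
  shows "hall_condition I (\<lambda>i. {j \<in> {..<n}. cycle_edge vs j \<in> G i})"
  unfolding hall_condition_def
proof (intro allI impI)
  fix J assume J: "J \<subseteq> I"
  let ?U = "\<Union>i\<in>J. {j \<in> {..<n}. cycle_edge vs j \<in> G i}"
  let ?m = "\<lambda>j. missing_count G I (cycle_edge vs j)"
  define T where "T = {..<n} - ?U"
  show "card J \<le> card ?U"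
  proof (rule ccontr)
    assume "\<not> card J \<le> card ?U"
    moreover have cJ: "card J \<le> n"
      using J card_I finite_I card_mono by blast
    moreover have "card T = n - card ?U"
      unfolding T_def by (subst card_Diff_subset) (auto intro: finite_subset[of _ "{..<n}"])
    ultimately have cT: "n + 1 \<le> card J + card T" "J \<noteq> {}"
      by auto
    have miss: "card J \<le> ?m j" if "j \<in> T" for j
      using that J finite_I unfolding T_def missing_count_def by (intro card_mono) auto
    have "T \<noteq> {}"
      using cT(1) cJ by auto
    then obtain j0 where "j0 \<in> T"
      by blast
    then have "card J \<le> n - 2"
      using miss missing_count_cycle_edge_le[OF assms] unfolding T_def by (meson DiffD1 lessThan_iff le_trans)
    then have "3 \<le> card T"
      using cT three_le_n by linarith
    obtain x where "x \<in> J"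
      using cT by blast
    then have "card T \<le> n - 3"
      using card_positions_missing_le[OF assms, of x T] J unfolding T_def by blast
    moreover have "card T * card J \<le> cycle_cost G I vs"
      using miss length_min_cost_cycle[OF assms] unfolding T_def by (intro card_mult_le_cycle_cost) auto
    ultimately show False
      using no_hall_violation_arith[OF \<open>3 \<le> card T\<close> _ cT(1) _ min_cost_cycle_cost_le[OF assms]]
        three_le_n by linarith
  qed
qed

lemma ex_rainbow_cycle:
  obtains vs \<sigma> where "distinct vs" "set vs = V" "length vs = n"
    "bij_betw \<sigma> I {..<n}" "\<forall>i\<in>I. cycle_edge vs (\<sigma> i) \<in> G i"
proof -
  obtain vs where "set vs = V" "min_cost_cycle G I vs"
    using min_cost_cycle_exists[OF finite_V] .
  then have vs: "min_cost_cycle G I vs" "set vs = V"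
    by simp_all
  let ?A = "\<lambda>i. {j \<in> {..<n}. cycle_edge vs j \<in> G i}"
  have "\<exists>\<sigma>. inj_on \<sigma> I \<and> (\<forall>i\<in>I. \<sigma> i \<in> ?A i)"
    using min_cost_cycle_hall_condition[OF vs] finite_I by (intro hall_theorem) simp_all
  then obtain \<sigma> where \<sigma>: "inj_on \<sigma> I" "\<And>i. i \<in> I \<Longrightarrow> \<sigma> i \<in> ?A i"
    by blast
  have "\<sigma> ` I = {..<n}"
  proof (rule card_subset_eq)
    show "\<sigma> ` I \<subseteq> {..<n}"
      using \<sigma>(2) by blast
    show "card (\<sigma> ` I) = card {..<n}"
      using card_image[OF \<sigma>(1)] card_I by simp
  qed simp
  then have "bij_betw \<sigma> I {..<n}"
    using \<sigma>(1) by (simp add: bij_betw_def)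
  then show ?thesis
    using that \<sigma>(2) vs length_min_cost_cycle[OF vs] by (auto simp: min_cost_cycle_def)
qed

end

lemma card_non_edges_le_if_dense:
  assumes "finite V" "simple_graph_on V E" "(card V - 1 choose 2) + 1 < card E"
  shows "card (non_edges V E) \<le> card V - 3"
proof (cases "card V")
  case 0
  then show ?thesis
    using card_non_edges[OF assms(1,2)] assms(3) by simp
next
  case (Suc m)
  then have "card (non_edges V E) + card E = m + (m choose 2)"
    using card_non_edges[OF assms(1,2)] by (simp add: numeral_2_eq_2)
  then show ?thesis
    using assms(3) Suc by simp
qed

theorem mainTheorem1:
  fixes n :: nat and G :: "nat \<Rightarrow> nat set set"
  assumes "n \<ge> 4"
    and "\<And>i. i \<in> {1..n} \<Longrightarrow> simple_graph_on {1..n} (G i)"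
    and "\<And>i. i \<in> {1..n} \<Longrightarrow> num_edges (G i) > (n - 1 choose 2) + 1"
  shows "rainbow_ham_cycle n G"
proof -
  let ?V = "{1..n}"
  have sparse: "card (non_edges ?V (G i)) \<le> card ?V - 3" if "i \<in> ?V" for i
  proof (rule card_non_edges_le_if_dense)
    show "simple_graph_on ?V (G i)"
      using assms(2)[OF that] .
    show "(card ?V - 1 choose 2) + 1 < card (G i)"
      using assms(3)[OF that] by (simp add: num_edges_def)
  qed simp
  interpret sparse_complements G ?V ?V n
  proof
    show "card ?V = n" "3 \<le> n"
      using assms(1) by simp_all
    show "\<And>i. i \<in> ?V \<Longrightarrow> card (non_edges ?V (G i)) \<le> n - 3"
      using sparse by simp
  qed simp_all
  obtain vs \<sigma> where "distinct vs" "set vs = ?V" "length vs = n"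
    "bij_betw \<sigma> ?V {..<n}" "\<forall>i\<in>?V. cycle_edge vs (\<sigma> i) \<in> G i"
    by (rule ex_rainbow_cycle)
  then show ?thesis
    using assms(1) unfolding rainbow_ham_cycle_def ham_cycle_seq_def by auto
qed

end
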